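(* Let $\mathcal{H}\subseteq\{-1,+1\}^{\mathbb{R}^d}$, $\sigma>0$, $\varepsilon>0$, and let $(x_1,y_1),\dots,(x_T,y_T)\in\mathbb{R}^d\times\{-1,+1\}$. Define $\mathsf{OPT}^{\sigma,\varepsilon}_{\mathrm{gauss}}=\min_{h\in\mathcal{H}}\sum_{t=1}^T\mathbb{1}\!\left[y_t\,\mathbb{E}_{z\sim\mathcal{N}(0,I_d)}[h(x_t+\sigma z)]\le\varepsilon\right]$ and $\ddot{\mathsf{OPT}}^{\sigma}_{\mathrm{gauss}}=\min_{h\in\mathcal{H}}\sum_{t=1}^T\Pr_{z\sim\mathcal{N}(0,I_d)}[h(x_t+\sigma z)\neq y_t]$. Then $$\mathsf{OPT}^{\sigma,\varepsilon}_{\mathrm{gauss}}\le 2\cdot\ddot{\mathsf{OPT}}^{\sigma}_{\mathrm{gauss}}+T\varepsilon.$$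
   Context: Functions in $\mathcal{H}$ are assumed measurable so that the expectations and probabilities are defined, and the minima are assumed to be attained (or read as infima). *)

theory Defs
  imports "HOL-Probability.Probability"
begin

definition std_gauss :: "('a::euclidean_space) measure" where
  "std_gauss = density lborel
     (\<lambda>z. ennreal ((2 * pi) powr (- real DIM('a) / 2) * exp (- (norm z)\<^sup>2 / 2)))"

definition opt_gauss ::
  "('a::euclidean_space \<Rightarrow> real) set \<Rightarrow> real \<Rightarrow> real \<Rightarrow> nat \<Rightarrow> (nat \<Rightarrow> 'a) \<Rightarrow> (nat \<Rightarrow> real) \<Rightarrow> real" where
  "opt_gauss H \<sigma> \<epsilon> T x y =
     (INF h\<in>H. (\<Sum>t=1..T.
        (if y t * (\<integral>z. h (x t + \<sigma> *\<^sub>R z) \<partial>std_gauss) \<le> \<epsilon> then 1 else 0)))"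

definition opt_gauss_dd ::
  "('a::euclidean_space \<Rightarrow> real) set \<Rightarrow> real \<Rightarrow> nat \<Rightarrow> (nat \<Rightarrow> 'a) \<Rightarrow> (nat \<Rightarrow> real) \<Rightarrow> real" where
  "opt_gauss_dd H \<sigma> T x y =
     (INF h\<in>H. (\<Sum>t=1..T. measure std_gauss {z \<in> space std_gauss. h (x t + \<sigma> *\<^sub>R z) \<noteq> y t}))"

end

theory Submission
  imports Defs
begin

text \<open>Because h and y t take values in {-1, 1}, the smoothed margin y t E[h(x t + \<sigma> z)] equals
  1 - 2 p t, where p t is the probability of a mistake. A margin violation 1 - 2 p t \<le> \<epsilon>
  therefore forces 1 \<le> 2 p t + \<epsilon>, so for every h the number of violations is at most
  2 \<Sum> p t + T \<epsilon>; taking infima over H gives the claim.\<close>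

lemma std_gauss_density_eq_prod:
  fixes z :: "'a::euclidean_space"
  shows "(2 * pi) powr (- real DIM('a) / 2) * exp (- (norm z)\<^sup>2 / 2)
       = (\<Prod>b\<in>Basis. std_normal_density (z \<bullet> b))"
proof -
  have "(\<Prod>b\<in>Basis. std_normal_density (z \<bullet> b))
      = (\<Prod>b\<in>(Basis::'a set). (1 / sqrt (2 * pi)) * exp (- (z \<bullet> b)\<^sup>2 / 2))"
    by (simp add: std_normal_density_def)
  also have "\<dots> = (1 / sqrt (2 * pi)) ^ DIM('a) * exp (\<Sum>b\<in>(Basis::'a set). - (z \<bullet> b)\<^sup>2 / 2)"
    by (simp only: prod.distrib exp_sum prod_constant finite_Basis)
  also have "(\<Sum>b\<in>(Basis::'a set). - (z \<bullet> b)\<^sup>2 / 2) = - (norm z)\<^sup>2 / 2"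
  proof -
    have "(norm z)\<^sup>2 = (\<Sum>b\<in>(Basis::'a set). (z \<bullet> b)\<^sup>2)"
      unfolding power2_norm_eq_inner by (subst euclidean_inner) (simp add: power2_eq_square)
    then show ?thesis
      by (simp add: sum_negf sum_divide_distrib[symmetric])
  qed
  also have "(1 / sqrt (2 * pi)) ^ DIM('a) = (2 * pi) powr (- real DIM('a) / 2)"
  proof -
    have "1 / sqrt (2 * pi) = (2 * pi) powr (- 1 / 2)"
      by (simp add: powr_minus_divide powr_half_sqrt)
    then show ?thesis
      by (simp add: powr_realpow[symmetric] powr_powr)
  qed
  finally show ?thesis ..
qed

lemma prob_space_std_gauss: "prob_space (std_gauss :: 'a::euclidean_space measure)"
proof
  have normal_integral: "(\<integral>\<^sup>+x. ennreal (std_normal_density x) \<partial>lborel) = 1"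
  proof -
    interpret N: prob_space "density lborel (\<lambda>x. ennreal (std_normal_density x))"
      by (rule prob_space_normal_density) simp
    show ?thesis
      using N.emeasure_space_1 by (simp add: emeasure_density)
  qed
  have "emeasure (std_gauss :: 'a measure) (space std_gauss)
      = (\<integral>\<^sup>+z. (\<Prod>b\<in>Basis. ennreal (std_normal_density (z \<bullet> b))) \<partial>(lborel :: 'a measure))"
    unfolding std_gauss_def std_gauss_density_eq_prod
    by (simp add: emeasure_density prod_ennreal)
  also have "\<dots> = 1"
    by (subst nn_integral_lborel_prod) (auto simp: normal_integral)
  finally show "emeasure (std_gauss :: 'a measure) (space std_gauss) = 1" .
qed

lemma sets_std_gauss [simp, measurable_cong]: "sets std_gauss = sets borel"
  unfolding std_gauss_def by simp

lemma (in prob_space) sign_times_expectation_eq: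
  assumes "f \<in> borel_measurable M" and "\<forall>z. f z \<in> {-1, 1}" and "c \<in> {-1, 1}"
  shows "c * expectation f = 1 - 2 * prob {z \<in> space M. f z \<noteq> c}"
proof -
  let ?A = "{z \<in> space M. f z \<noteq> c}"
  have "?A \<in> events"
    using assms(1) by measurable
  have "c * expectation f = expectation (\<lambda>z. c * f z)"
    by simp
  also have "\<dots> = expectation (\<lambda>z. 1 - 2 * indicator ?A z)"
    using assms(2,3) by (intro Bochner_Integration.integral_cong) (auto simp: indicator_def)
  also have "\<dots> = 1 - 2 * prob ?A"
    using \<open>?A \<in> events\<close>
    by (subst Bochner_Integration.integral_diff)
      (auto simp: prob_space emeasure_finite less_top[symmetric])
  finally show ?thesis .
qed

lemma cINF_le_mult_INF_add:
  fixes f g :: "'b \<Rightarrow> real"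
  assumes "H \<noteq> {}" and "bdd_below (f ` H)" and "a > 0"
    and "\<And>h. h \<in> H \<Longrightarrow> f h \<le> a * g h + c"
  shows "(INF h\<in>H. f h) \<le> a * (INF h\<in>H. g h) + c"
proof -
  have "((INF h\<in>H. f h) - c) / a \<le> (INF h\<in>H. g h)"
  proof (rule cINF_greatest[OF assms(1)])
    fix h assume "h \<in> H"
    then show "((INF h\<in>H. f h) - c) / a \<le> g h"
      using cINF_lower[OF assms(2)] assms(3,4) by (fastforce simp: divide_le_eq mult.commute)
  qed
  then show ?thesis
    using assms(3) by (simp add: divide_le_eq mult.commute)
qed

theorem claim22:
  fixes H :: "('a::euclidean_space \<Rightarrow> real) set"
    and \<sigma> \<epsilon> :: real and T :: nat and x :: "nat \<Rightarrow> 'a" and y :: "nat \<Rightarrow> real"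
  assumes "H \<noteq> {}"
    and "\<forall>h\<in>H. \<forall>u. h u \<in> {-1, 1}"
    and "\<forall>h\<in>H. h \<in> borel_measurable borel"
    and "\<sigma> > 0" and "\<epsilon> > 0"
    and "\<forall>t\<in>{1..T}. y t \<in> {-1, 1}"
  shows "opt_gauss H \<sigma> \<epsilon> T x y \<le> 2 * opt_gauss_dd H \<sigma> T x y + real T * \<epsilon>"
proof -
  interpret G: prob_space "std_gauss :: 'a measure"
    by (rule prob_space_std_gauss)
  let ?violation = "\<lambda>h t. if y t * (\<integral>z. h (x t + \<sigma> *\<^sub>R z) \<partial>std_gauss) \<le> \<epsilon> then 1 else 0 :: real"
  let ?err = "\<lambda>h t. G.prob {z \<in> space std_gauss. h (x t + \<sigma> *\<^sub>R z) \<noteq> y t}"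
  have violation_le: "?violation h t \<le> 2 * ?err h t + \<epsilon>" if "h \<in> H" "t \<in> {1..T}" for h t
    using that assms(2,3,5,6) G.sign_times_expectation_eq[of "\<lambda>z. h (x t + \<sigma> *\<^sub>R z)" "y t"]
    by (auto simp: G.prob_space)
  have violations_le: "(\<Sum>t=1..T. ?violation h t) \<le> 2 * (\<Sum>t=1..T. ?err h t) + real T * \<epsilon>"
    if "h \<in> H" for h
  proof -
    have "(\<Sum>t=1..T. ?violation h t) \<le> (\<Sum>t=1..T. 2 * ?err h t + \<epsilon>)"
      using violation_le[OF that] by (rule sum_mono)
    then show ?thesis
      by (simp add: sum.distrib sum_distrib_left)
  qed
  have "bdd_below ((\<lambda>h. \<Sum>t=1..T. ?violation h t) ` H)"
    by (rule bdd_belowI[where m=0]) (auto intro!: sum_nonneg)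
  then show ?thesis
    unfolding opt_gauss_def opt_gauss_dd_def
    using cINF_le_mult_INF_add[OF assms(1) _ _ violations_le] by simp
qed

end
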